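(* Let $\Gamma\subseteq\mathbb{Z}^d$ be a finite set. Then for every $x\in\Gamma$, $$\Phi_\Gamma(x)=\sum_{e\in\mathbb{Z}^d,|e|=1}\frac1{2d}\exp(e)\otimes\Phi_\Gamma(x+e),$$ and consequently for every $n\ge2$: (a) $\displaystyle\Delta\rho_n(\Phi_\Gamma(x))=-\sum_{|e|=1}\frac1{2d}\sum_{i=1}^n\frac{e^{\otimes i}}{i!}\otimes\rho_{n-i}(\Phi_\Gamma(x+e))$ for $x\in\Gamma$; (b) $\rho_n(\Phi_\Gamma(x))=0$ for $x\in\partial\Gamma$; and $\rho_0(\Phi_\Gamma(x))=1$, $\rho_1(\Phi_\Gamma(x))=0$ for every $x\in\bar\Gamma$.
   Context: Let $(S_k)_{k\ge0}$ be the simple random walk on $\mathbb{Z}^d$ started at $S_0=x$ (under $\mathbb{E}^x$), with i.i.d. increments uniformly distributed on the $2d$ unit vectors $e\in\mathbb{Z}^d$, $|e|=1$. $\partial\Gamma=\{y\in\mathbb{Z}^d\setminus\Gamma: |y-w|=1\text{ for some }w\in\Gamma\}$, $\bar\Gamma=\Gamma\cup\partial\Gamma$, and $\tau=\tau_\Gamma=\min\{k\ge0:S_k\notin\Gamma\}$. $T((\mathbb{R}^d))$ is the algebra of formal tensor series $\mathbf a=(a_0,a_1,\dots)$, $a_n\in(\mathbb{R}^d)^{\otimes n}$, with $(\mathbf a\otimes\mathbf b)_n=\sum_{k=0}^na_k\otimes b_{n-k}$ and $\rho_n(\mathbf a)=a_n$; for $v\in\mathbb{R}^d$, $\exp(v)=\sum_{i\ge0}v^{\otimes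 i}/i!$ (the signature of the straight segment with increment $v$). $\Phi_\Gamma(x)$ is the expectation (coordinatewise) of the signature of the piecewise linear path through $S_0,S_1,\dots,S_\tau$, i.e. $\Phi_\Gamma(x)=\mathbb{E}^x[\exp(S_1-S_0)\otimes\cdots\otimes\exp(S_\tau-S_{\tau-1})]$ (equal to $\mathbf 1=(1,0,0,\dots)$ if $\tau=0$). The discrete Laplacian is $\Delta f(x)=\frac1{2d}\sum_{|e|=1}f(x+e)-f(x)$. *)

theory Defs
  imports "HOL-Probability.Probability"
begin

text \<open>The dimension d is CARD('d) for a finite index type 'd;
  lattice points of Z^d are vectors int^'d.  A formal tensor series
  a = (a_0, a_1, ...) in T((R^d)) is represented by its coordinates: the value at
  a word w = [i_1,...,i_n] of indices is the (i_1,...,i_n) component of a_n.\<close>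

type_synonym 'd tseries = "'d list \<Rightarrow> real"

definition tone :: "'d tseries" where
  "tone = (\<lambda>w. if w = [] then 1 else 0)"

definition tzero :: "'d tseries" where
  "tzero = (\<lambda>w. 0)"

definition tmul :: "'d tseries \<Rightarrow> 'd tseries \<Rightarrow> 'd tseries" where
  "tmul a b = (\<lambda>w. \<Sum>k\<le>length w. a (take k w) * b (drop k w))"

definition rho :: "nat \<Rightarrow> 'd tseries \<Rightarrow> 'd tseries" where
  "rho n a = (\<lambda>w. if length w = n then a w else 0)"

definition tpow :: "real^'d \<Rightarrow> nat \<Rightarrow> 'd tseries" where
  "tpow v i = (\<lambda>w. if length w = i then (\<Prod>j<length w. v $ (w ! j)) else 0)"

definition tscale :: "real \<Rightarrow> 'd tseries \<Rightarrow> 'd tseries" where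
  "tscale c a = (\<lambda>w. c * a w)"

text \<open>exp(v) = sum_i v^{\<otimes> i}/i! (degree-wise; each coordinate has one nonzero term).\<close>
definition texp :: "real^'d \<Rightarrow> 'd tseries" where
  "texp v = (\<lambda>w. tpow v (length w) w / fact (length w))"

definition rvec :: "int^'d \<Rightarrow> real^'d" where
  "rvec e = (\<chi> i. real_of_int (e $ i))"

definition unit_steps :: "(int^'d) set" where
  "unit_steps = {e. (\<Sum>i\<in>UNIV. (e $ i)^2) = 1}"

definition lattice_boundary :: "(int^'d) set \<Rightarrow> (int^'d) set" where
  "lattice_boundary \<Gamma> = {y. y \<notin> \<Gamma> \<and> (\<exists>w\<in>\<Gamma>. y - w \<in> unit_steps)}"

definition lattice_closure :: "(int^'d) set \<Rightarrow> (int^'d) set" where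
  "lattice_closure \<Gamma> = \<Gamma> \<union> lattice_boundary \<Gamma>"

definition dlap :: "(int^'d \<Rightarrow> real) \<Rightarrow> int^'d \<Rightarrow> real" where
  "dlap f x = (1 / (2 * real CARD('d))) * (\<Sum>e\<in>unit_steps. f (x + e)) - f x"

text \<open>Simple random walk: probability space of i.i.d. increment streams,
  each increment uniform on the 2d unit vectors.\<close>
definition srw :: "(int^'d) stream measure" where
  "srw = stream_space (measure_pmf (pmf_of_set unit_steps))"

definition walk :: "int^'d \<Rightarrow> (int^'d) stream \<Rightarrow> nat \<Rightarrow> int^'d" where
  "walk x \<omega> k = x + (\<Sum>i<k. \<omega> !! i)"

text \<open>Exit time tau = min{k \<ge> 0 : S_k \<notin> \<Gamma>} (a.s. finite when \<Gamma> is finite).\<close>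
definition exit_time :: "(int^'d) set \<Rightarrow> int^'d \<Rightarrow> (int^'d) stream \<Rightarrow> nat" where
  "exit_time \<Gamma> x \<omega> = (LEAST k. walk x \<omega> k \<notin> \<Gamma>)"

text \<open>Signature of the piecewise linear path with increments u_1,...,u_m:
  exp(u_1) \<otimes> ... \<otimes> exp(u_m)  (equal to 1 for m = 0).\<close>
definition path_sig :: "(int^'d) list \<Rightarrow> 'd tseries" where
  "path_sig us = foldr (\<lambda>u a. tmul (texp (rvec u)) a) us tone"

definition Phi :: "(int^'d) set \<Rightarrow> int^'d \<Rightarrow> 'd tseries" where
  "Phi \<Gamma> x = (\<lambda>w. integral\<^sup>L srw (\<lambda>\<omega>. path_sig (stake (exit_time \<Gamma> x \<omega>) \<omega>) w))"

end

theory Submission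
  imports Defs
begin

(* The heart of the theorem is the first-step recursion
     Phi(x) = 1/(2d) * sum_e exp(e) (x) Phi(x + e)    for x in Gamma,
   obtained by conditioning on the first increment of the walk: the walk law on
   streams is the law of e ## X with e uniform and X an independent copy.  For this
   conditioning to be legitimate the signature must be integrable, which needs two
   facts about the exit time of a finite set: (i) it is almost surely attained, and
   (ii) it has geometric tails, because from every point the walk leaves Gamma with
   probability at least (2d)^-(|Gamma|+1) within |Gamma|+1 steps (by marching
   straight along a coordinate axis).  Together with the polynomial bound
   |<sig(path), w>| <= (length + 1)^|w| this gives integrability.
   The remaining claims are then formal: degree-n parts of the recursion give the
   Laplacian identity (a); outside Gamma the exit time is 0 so Phi = 1, giving (b)
   and rho_0 = 1; and rho_1 is a harmonic function vanishing off Gamma (the steps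
   are symmetric), hence zero by the maximum principle. *)

lemma unit_steps_iff:
  "(e::int^'d) \<in> unit_steps \<longleftrightarrow> (\<exists>i. e = axis i 1 \<or> e = axis i (-1))"
proof
  assume "e \<in> unit_steps"
  hence s: "(\<Sum>i\<in>UNIV. (e $ i)^2) = 1" by (simp add: unit_steps_def)
  obtain i where i: "e $ i \<noteq> 0"
  proof (rule ccontr)
    assume "\<not> thesis"
    hence "\<forall>i. e $ i = 0" using that by blast
    with s show False by simp
  qed
  have split: "(\<Sum>j\<in>UNIV. (e $ j)^2) = (e $ i)^2 + (\<Sum>j\<in>UNIV-{i}. (e $ j)^2)"
    by (simp add: sum.remove)
  have "(e $ i)^2 \<ge> 1" using i
    by (smt (verit) mult_le_cancel_right1 power2_eq_square zero_less_mult_iff)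
  moreover have "(\<Sum>j\<in>UNIV-{i}. (e $ j)^2) \<ge> 0" by (intro sum_nonneg) auto
  ultimately have ei: "(e $ i)^2 = 1" and rest: "(\<Sum>j\<in>UNIV-{i}. (e $ j)^2) = 0"
    using s split by linarith+
  have "\<And>j. j \<noteq> i \<Longrightarrow> e $ j = 0"
    using rest by (subst (asm) sum_nonneg_eq_0_iff) auto
  moreover have "e $ i = 1 \<or> e $ i = -1" using ei by (metis power2_eq_1_iff)
  ultimately show "\<exists>i. e = axis i 1 \<or> e = axis i (-1)"
    by (intro exI[of _ i]) (auto simp: vec_eq_iff axis_def)
next
  assume "\<exists>i. e = axis i 1 \<or> e = axis i (-1)"
  then show "e \<in> unit_steps"
    by (auto simp: unit_steps_def axis_def power2_eq_square if_distrib[of "\<lambda>x. x * x"]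
        sum.delta cong: if_cong)
qed

lemma axis_in_unit_steps: "axis i (1::int) \<in> unit_steps"
  by (auto simp: unit_steps_iff)

lemma card_unit_steps: "card (unit_steps :: (int^'d) set) = 2 * CARD('d)"
proof -
  have eq: "(unit_steps :: (int^'d) set) = (\<lambda>(i,s). axis i s) ` (UNIV \<times> {1, -1})"
    by (auto simp: unit_steps_iff image_iff)
  have "inj_on (\<lambda>(i::'d,s::int). axis i s) (UNIV \<times> {1, -1})"
    by (auto simp: inj_on_def axis_eq_axis)
  then have "card (unit_steps :: (int^'d) set) = card ((UNIV::'d set) \<times> ({1, -1}::int set))"
    unfolding eq by (rule card_image)
  then show ?thesis by (simp add: card_cartesian_product)
qed

lemma finite_unit_steps[simp]: "finite (unit_steps :: (int^'d) set)"
  using card_unit_steps[where 'd='d] card.infinite by fastforce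

lemma unit_steps_not_empty[simp]: "(unit_steps :: (int^'d) set) \<noteq> {}"
  using card_unit_steps[where 'd='d] by auto

lemma two_dim_ge_2: "2 \<le> 2 * real CARD('d::finite)"
  using zero_less_card_finite[where 'a='d] by linarith

lemma unit_steps_uminus: "e \<in> unit_steps \<Longrightarrow> - e \<in> unit_steps"
  by (simp add: unit_steps_def)

lemma unit_steps_coord: "e \<in> unit_steps \<Longrightarrow> \<bar>e $ i\<bar> \<le> 1"
  by (auto simp: unit_steps_iff axis_def)

text \<open>The step law is centred: by the symmetry e \<mapsto> -e every coordinate averages to 0.\<close>
lemma sum_unit_steps_coord: "(\<Sum>e\<in>(unit_steps::(int^'d) set). rvec e $ i) = 0"
proof -
  have "(\<Sum>e\<in>(unit_steps::(int^'d) set). rvec e $ i) = (\<Sum>e\<in>unit_steps. rvec (- e) $ i)"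
    by (rule sum.reindex_bij_witness[where i=uminus and j=uminus]) (auto simp: unit_steps_uminus)
  also have "\<dots> = - (\<Sum>e\<in>(unit_steps::(int^'d) set). rvec e $ i)"
    by (simp add: rvec_def sum_negf)
  finally show ?thesis by simp
qed

lemma ray_leaves_finite_set:
  fixes x :: "int^'d"
  assumes fin: "finite \<Gamma>"
  shows "\<exists>s\<le>card \<Gamma>. x + of_nat s *s axis i 1 \<notin> \<Gamma>"
proof (rule ccontr)
  assume "\<not> ?thesis"
  hence sub: "(\<lambda>s. x + of_nat s *s axis i 1) ` {0..card \<Gamma>} \<subseteq> \<Gamma>" by auto
  have "inj_on (\<lambda>s::nat. x + of_nat s *s axis i (1::int)) {0..card \<Gamma>}"
    by (rule inj_onI) (drule arg_cong[where f="\<lambda>v. v $ i"], simp add: axis_def)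
  from card_inj_on_le[OF this sub fin] show False by simp
qed

lemma texp_Nil: "texp v [] = 1"
  by (simp add: texp_def tpow_def)

lemma path_sig_Nil: "path_sig [] = tone"
  by (simp add: path_sig_def)

lemma path_sig_Cons: "path_sig (u # us) = tmul (texp (rvec u)) (path_sig us)"
  by (simp add: path_sig_def)

lemma path_sig_at_Nil: "path_sig us [] = 1"
  by (induction us) (simp_all add: path_sig_Nil path_sig_Cons tone_def tmul_def texp_Nil)

lemma texp_unit_bound:
  assumes "u \<in> unit_steps"
  shows "\<bar>texp (rvec u) v\<bar> \<le> 1 / fact (length v)"
proof -
  have "\<bar>\<Prod>j<length v. rvec u $ (v ! j)\<bar> \<le> 1"
    unfolding abs_prod using unit_steps_coord[OF assms]
    by (intro prod_le_1) (auto simp: rvec_def, metis of_int_1 of_int_abs of_int_le_iff)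
  thus ?thesis by (simp add: texp_def tpow_def divide_right_mono)
qed

text \<open>Coefficients of the signature of a lattice path grow only polynomially in its
  length: |<sig, w>| \<le> (length + 1)^|w|, by the binomial theorem.\<close>
lemma path_sig_bound:
  "set us \<subseteq> unit_steps \<Longrightarrow> \<bar>path_sig us w\<bar> \<le> (real (length us) + 1) ^ length w"
proof (induction us arbitrary: w)
  case Nil then show ?case by (simp add: path_sig_Nil tone_def)
next
  case (Cons u us)
  define n where "n = length w"
  define m where "m = real (length us)"
  have u: "u \<in> unit_steps" and us: "set us \<subseteq> unit_steps" using Cons.prems by auto
  have "\<bar>path_sig (u # us) w\<bar> \<le> (\<Sum>k\<le>n. \<bar>texp (rvec u) (take k w)\<bar> * \<bar>path_sig us (drop k w)\<bar>)"
    unfolding path_sig_Cons tmul_def n_def by (rule order_trans[OF sum_abs]) (simp add: abs_mult)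
  also have "\<dots> \<le> (\<Sum>k\<le>n. (1 / fact k) * (m + 1) ^ (n - k))"
  proof (intro sum_mono mult_mono)
    fix k assume "k \<in> {..n}"
    hence "length (take k w) = k" "length (drop k w) = n - k" by (auto simp: n_def)
    thus "\<bar>texp (rvec u) (take k w)\<bar> \<le> 1 / fact k" "\<bar>path_sig us (drop k w)\<bar> \<le> (m + 1) ^ (n - k)"
      using texp_unit_bound[OF u, of "take k w"] Cons.IH[OF us, of "drop k w"] by (auto simp: m_def)
  qed auto
  also have "\<dots> \<le> (\<Sum>k\<le>n. of_nat (n choose k) * 1 ^ k * (m + 1) ^ (n - k))"
  proof (intro sum_mono mult_right_mono)
    fix k assume "k \<in> {..n}"
    have "1 / fact k \<le> (1::real)" by simp
    also have "\<dots> \<le> of_nat (n choose k)" using \<open>k \<in> {..n}\<close> by (simp add: Suc_leI)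
    finally show "1 / fact k \<le> of_nat (n choose k) * (1::real) ^ k" by simp
  qed (auto simp: m_def)
  also have "\<dots> = (real (length (u # us)) + 1) ^ length w"
    by (subst binomial_ring[symmetric]) (simp add: m_def n_def add_ac)
  finally show ?case .
qed

lemma tmul_tpow_rho:
  assumes i: "i \<le> n"
  shows "tmul (tscale (1 / fact i) (tpow v i)) (rho (n - i) b) w =
         (if length w = n then texp v (take i w) * b (drop i w) else 0)"
proof -
  have summand: "tscale (1 / fact i) (tpow v i) (take k w) * rho (n - i) b (drop k w) =
      (if k = i then (if length w = n then texp v (take i w) * b (drop i w) else 0) else 0)"
    if "k \<le> length w" for k
    using that i by (auto simp: tscale_def tpow_def rho_def texp_def)
  have "tmul (tscale (1 / fact i) (tpow v i)) (rho (n - i) b) w =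
      (\<Sum>k\<le>length w. (if k = i then (if length w = n then texp v (take i w) * b (drop i w) else 0) else 0))"
    unfolding tmul_def by (rule sum.cong[OF refl]) (simp add: summand)
  also have "\<dots> = (if length w = n then texp v (take i w) * b (drop i w) else 0)"
    using i by (auto simp: sum.delta)
  finally show ?thesis .
qed

lemma tmul_texp_minus:
  assumes "length w = n"
  shows "(\<Sum>i=1..n. tmul (tscale (1 / fact i) (tpow v i)) (rho (n - i) b) w)
         = tmul (texp v) b w - b w"
proof -
  have "(\<Sum>i=1..n. tmul (tscale (1 / fact i) (tpow v i)) (rho (n - i) b) w)
      = (\<Sum>i=Suc 0..n. texp v (take i w) * b (drop i w))"
    using assms by (intro sum.cong) (auto simp: tmul_tpow_rho)
  also have "\<dots> = (\<Sum>i=0..n. texp v (take i w) * b (drop i w)) - b w"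
    by (subst sum.atLeast_Suc_atMost[of 0 n]) (auto simp: texp_Nil)
  also have "\<dots> = tmul (texp v) b w - b w"
    using assms by (simp add: tmul_def atLeast0AtMost)
  finally show ?thesis .
qed

section \<open>The random walk measure and conditioning on the first step\<close>

lemma (in prob_space) stream_space_eq_distr_Stream:
  "stream_space M = distr (M \<Otimes>\<^sub>M stream_space M) (stream_space M) (\<lambda>(x,X). x ## X)"
proof (rule measure_eqI)
  interpret S: prob_space "stream_space M" by (rule prob_space_stream_space)
  fix A assume A[measurable]: "A \<in> sets (stream_space M)"
  have "emeasure (distr (M \<Otimes>\<^sub>M stream_space M) (stream_space M) (\<lambda>(x,X). x ## X)) A =
      emeasure (M \<Otimes>\<^sub>M stream_space M) ((\<lambda>(x,X). x ## X) -` A \<inter> space (M \<Otimes>\<^sub>M stream_space M))"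
    by (simp add: emeasure_distr)
  also have "\<dots> = (\<integral>\<^sup>+x. emeasure (stream_space M)
      (Pair x -` ((\<lambda>(x,X). x ## X) -` A \<inter> space (M \<Otimes>\<^sub>M stream_space M))) \<partial>M)"
    by (intro S.emeasure_pair_measure_alt) measurable
  also have "\<dots> = (\<integral>\<^sup>+t. emeasure (stream_space M) {x\<in>space (stream_space M). t ## x \<in> A} \<partial>M)"
    by (intro nn_integral_cong arg_cong2[where f=emeasure])
       (auto simp: space_pair_measure space_stream_space)
  also have "\<dots> = emeasure (stream_space M) A"
    by (rule emeasure_stream_space[symmetric]) simp
  finally show "emeasure (stream_space M) A =
      emeasure (distr (M \<Otimes>\<^sub>M stream_space M) (stream_space M) (\<lambda>(x,X). x ## X)) A" ..
qed simp

lemma (in prob_space) integral_stream_space_Stream: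
  fixes f :: "'a stream \<Rightarrow> real"
  assumes f: "integrable (stream_space M) f"
  shows "integral\<^sup>L (stream_space M) f = (\<integral>x. (\<integral>X. f (x ## X) \<partial>stream_space M) \<partial>M)"
proof -
  interpret S: prob_space "stream_space M" by (rule prob_space_stream_space)
  interpret P: pair_sigma_finite M "stream_space M" ..
  have [measurable]: "f \<in> borel_measurable (stream_space M)" using f by auto
  have cons: "(\<lambda>(x,X). x ## X) \<in> measurable (M \<Otimes>\<^sub>M stream_space M) (stream_space M)"
    by measurable
  have "integrable (M \<Otimes>\<^sub>M stream_space M) (\<lambda>z. f ((\<lambda>(x,X). x ## X) z))"
    using f by (subst (asm) stream_space_eq_distr_Stream) (simp add: integrable_distr_eq[OF cons])
  moreover have "integral\<^sup>L (stream_space M) f =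
      integral\<^sup>L (M \<Otimes>\<^sub>M stream_space M) (\<lambda>z. f ((\<lambda>(x,X). x ## X) z))"
    by (subst stream_space_eq_distr_Stream) (simp add: integral_distr[OF cons])
  ultimately show ?thesis
    by (simp add: P.integral_fst'[symmetric] case_prod_beta)
qed

abbreviation step_law :: "(int^'d) measure" where
  "step_law \<equiv> measure_pmf (pmf_of_set unit_steps)"

lemma prob_space_srw: "prob_space (srw :: (int^'d) stream measure)"
  unfolding srw_def by (rule prob_space.prob_space_stream_space) (rule prob_space_measure_pmf)

lemma space_srw[simp]: "space (srw :: (int^'d) stream measure) = UNIV"
  by (simp add: srw_def space_stream_space)

lemma srw_integral_first_step:
  fixes f :: "(int^'d) stream \<Rightarrow> real"
  assumes "integrable srw f"
  shows "integral\<^sup>L srw f = (\<Sum>e\<in>unit_steps. integral\<^sup>L srw (\<lambda>X. f (e ## X))) / (2 * real CARD('d))"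
proof -
  have "integral\<^sup>L srw f = (\<integral>e. (\<integral>X. f (e ## X) \<partial>srw) \<partial>step_law)"
    using prob_space.integral_stream_space_Stream[OF prob_space_measure_pmf] assms
    by (simp add: srw_def)
  also have "\<dots> = (\<Sum>e\<in>unit_steps. integral\<^sup>L srw (\<lambda>X. f (e ## X))) / (2 * real CARD('d))"
    by (subst integral_pmf_of_set) (simp_all add: card_unit_steps)
  finally show ?thesis .
qed

lemma sets_srw: "sets (srw :: (int^'d) stream measure) = sets (stream_space (count_space UNIV))"
  unfolding srw_def by (rule sets_stream_space_cong) simp

lemma Stream_measurable[measurable]:
  "(\<lambda>X. e ## X) \<in> measurable (srw :: (int^'d) stream measure) srw"
  unfolding srw_def by measurable

lemma stake_fun_measurable:
  assumes "\<And>l. g l \<in> space N"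
  shows "(\<lambda>\<omega>. g (stake k \<omega>)) \<in> measurable (srw :: (int^'d) stream measure) N"
proof -
  have "stake k \<in> measurable (srw :: (int^'d) stream measure) (count_space UNIV)"
    using measurable_stake[where 'a="int^'d"] by (simp add: measurable_cong_sets[OF sets_srw refl])
  then show ?thesis
    by (rule measurable_compose) (simp add: measurable_count_space_eq1 assms)
qed

lemma AE_srw_unit_steps: "AE \<omega> in (srw :: (int^'d) stream measure). \<forall>i. \<omega> !! i \<in> unit_steps"
proof -
  have "AE \<omega> in stream_space (step_law :: (int^'d) measure). stream_all (\<lambda>x. x \<in> unit_steps) \<omega>"
    by (rule prob_space.AE_stream_all[OF prob_space_measure_pmf]) (auto simp: AE_measure_pmf_iff)
  thus ?thesis unfolding srw_def by (simp add: stream_all_def sset_range)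
qed

lemma walk_stake: "walk x \<omega> k = x + sum_list (stake k \<omega>)"
proof -
  have "(\<Sum>i<k. \<omega> !! i) = sum_list (stake k \<omega>)" for \<omega>
  proof (induction k arbitrary: \<omega>)
    case (Suc k)
    have "(\<Sum>i<Suc k. \<omega> !! i) = \<omega> !! 0 + (\<Sum>i<k. stl \<omega> !! i)"
      by (subst sum.lessThan_Suc_shift) simp
    then show ?case using Suc[of "stl \<omega>"] by simp
  qed simp
  thus ?thesis by (simp add: walk_def)
qed

lemma walk_0[simp]: "walk x \<omega> 0 = x"
  by (simp add: walk_def)

lemma walk_Stream_Suc[simp]: "walk x (e ## X) (Suc k) = walk (x + e) X k"
  by (simp add: walk_stake)

lemma walk_measurable[measurable]:
  "(\<lambda>\<omega>. walk x \<omega> k) \<in> measurable (srw :: (int^'d) stream measure) (count_space UNIV)"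
  unfolding walk_stake by (rule stake_fun_measurable) simp

lemma exit_time_measurable[measurable]:
  "exit_time \<Gamma> x \<in> measurable (srw :: (int^'d) stream measure) (count_space UNIV)"
  unfolding exit_time_def[abs_def] walk_stake
  by (rule measurable_Least) (rule stake_fun_measurable, simp)

lemma path_sig_exit_measurable[measurable]:
  "(\<lambda>\<omega>. path_sig (stake (exit_time \<Gamma> x \<omega>) \<omega>) w) \<in> borel_measurable (srw :: (int^'d) stream measure)"
  by (rule measurable_compose_countable[where g="exit_time \<Gamma> x"]) (auto intro: stake_fun_measurable)

lemma exit_time_outside: "x \<notin> \<Gamma> \<Longrightarrow> exit_time \<Gamma> x \<omega> = 0"
  by (simp add: exit_time_def)

lemma exit_time_Stream:
  assumes x: "x \<in> \<Gamma>" and k: "walk (x + e) X k \<notin> \<Gamma>"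
  shows "exit_time \<Gamma> x (e ## X) = Suc (exit_time \<Gamma> (x + e) X)"
proof -
  have "(LEAST k. walk x (e ## X) k \<notin> \<Gamma>) = Suc (LEAST m. walk x (e ## X) (Suc m) \<notin> \<Gamma>)"
    by (rule Least_Suc[where n="Suc k"]) (use x k in simp_all)
  thus ?thesis unfolding exit_time_def by simp
qed

section \<open>Survival probabilities decay geometrically\<close>

definition stays_in :: "(int^'d) set \<Rightarrow> int^'d \<Rightarrow> nat \<Rightarrow> (int^'d) stream \<Rightarrow> bool" where
  "stays_in \<Gamma> x m \<omega> \<longleftrightarrow> (\<forall>k\<le>m. walk x \<omega> k \<in> \<Gamma>)"

definition survival :: "(int^'d) set \<Rightarrow> nat \<Rightarrow> int^'d \<Rightarrow> real" where
  "survival \<Gamma> m x = measure srw {\<omega>. stays_in \<Gamma> x m \<omega>}"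

lemma stays_in_sets[measurable]:
  "{\<omega>. stays_in \<Gamma> x m \<omega>} \<in> sets (srw :: (int^'d) stream measure)"
proof -
  have "{\<omega>. stays_in \<Gamma> x m \<omega>} = (\<Inter>k\<in>{..m}. (\<lambda>\<omega>. walk x \<omega> k) -` \<Gamma> \<inter> space srw)"
    by (auto simp: stays_in_def)
  also have "\<dots> \<in> sets (srw :: (int^'d) stream measure)"
    by (intro sets.finite_INT measurable_sets[OF walk_measurable]) auto
  finally show ?thesis .
qed

lemma stays_in_Stream:
  "stays_in \<Gamma> x (Suc m) (e ## X) \<longleftrightarrow> x \<in> \<Gamma> \<and> stays_in \<Gamma> (x + e) m X"
proof -
  have "stays_in \<Gamma> x (Suc m) (e ## X) \<longleftrightarrow>
      walk x (e ## X) 0 \<in> \<Gamma> \<and> (\<forall>k\<le>m. walk x (e ## X) (Suc k) \<in> \<Gamma>)"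
    unfolding stays_in_def by (metis Suc_le_mono le0 not0_implies_Suc)
  thus ?thesis by (simp add: stays_in_def)
qed

lemma exit_time_gt_imp_stays_in: "m < exit_time \<Gamma> x \<omega> \<Longrightarrow> stays_in \<Gamma> x m \<omega>"
  unfolding stays_in_def exit_time_def by (meson not_less_Least order.strict_trans1)

lemma survival_le_1: "survival \<Gamma> m x \<le> 1"
  unfolding survival_def by (rule prob_space.prob_le_1[OF prob_space_srw])

lemma survival_outside:
  assumes "x \<notin> \<Gamma>"
  shows "survival \<Gamma> m x = 0"
proof -
  have "{\<omega>. stays_in \<Gamma> x m \<omega>} = {}"
    using assms by (auto simp: stays_in_def dest: spec[of _ 0])
  thus ?thesis by (simp add: survival_def)
qed

lemma survival_mono: "survival \<Gamma> (m + k) x \<le> survival \<Gamma> m x"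
proof -
  interpret S: prob_space "srw :: (int^'d) stream measure" by (rule prob_space_srw)
  show ?thesis
    unfolding survival_def by (intro S.finite_measure_mono) (auto simp: stays_in_def)
qed

lemma survival_Suc:
  assumes "(x::int^'d) \<in> \<Gamma>"
  shows "survival \<Gamma> (Suc m) x = (\<Sum>e\<in>unit_steps. survival \<Gamma> m (x + e)) / (2 * real CARD('d))"
proof -
  interpret S: prob_space "srw :: (int^'d) stream measure" by (rule prob_space_srw)
  have eq: "survival \<Gamma> k y = integral\<^sup>L srw (indicator {\<omega>. stays_in \<Gamma> y k \<omega>})" for k y
    by (simp add: survival_def)
  have "integrable srw (indicator {\<omega>. stays_in \<Gamma> x (Suc m) \<omega>} :: _ \<Rightarrow> real)"
    by (rule integrable_real_indicator) (simp_all add: less_top[symmetric] S.emeasure_finite)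
  from srw_integral_first_step[OF this]
  have "survival \<Gamma> (Suc m) x = (\<Sum>e\<in>unit_steps.
      integral\<^sup>L srw (\<lambda>X. indicator {\<omega>. stays_in \<Gamma> x (Suc m) \<omega>} (e ## X) :: real)) / (2 * real CARD('d))"
    by (simp add: eq)
  also have "\<dots> = (\<Sum>e\<in>unit_steps. survival \<Gamma> m (x + e)) / (2 * real CARD('d))"
    unfolding eq using assms
    by (intro arg_cong2[where f="(/)"] sum.cong refl Bochner_Integration.integral_cong)
       (auto simp: stays_in_Stream indicator_def)
  finally show ?thesis .
qed

text \<open>Escape along a ray: if the ray from x in direction u leaves \<Gamma> within s steps and
  survival for m steps is at most c everywhere, then survival for m + s steps from x is
  at most c (1 - (2d)^-s), since with probability (2d)^-s the walk follows the ray.\<close>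
lemma survival_escape_along_ray:
  fixes x :: "int^'d"
  assumes u: "u \<in> unit_steps" and c: "\<forall>y. survival \<Gamma> m y \<le> c"
    and ray: "\<exists>s'\<le>s. x + of_nat s' *s u \<notin> \<Gamma>"
  shows "survival \<Gamma> (m + s) x \<le> c * (1 - (1 / (2 * real CARD('d))) ^ s)"
  using ray
proof (induction s arbitrary: x)
  define N where "N = 2 * real CARD('d)"
  have N: "N \<ge> 2" unfolding N_def by (rule two_dim_ge_2)
  have c0: "c \<ge> 0"
    using c by (metis measure_nonneg order_trans survival_def)
  {
    case 0
    then have "x \<notin> \<Gamma>" by (auto simp: vec_eq_iff)
    then show ?case by (simp add: survival_outside)
  next
    case (Suc s)
    show ?case
    proof (cases "x \<in> \<Gamma>")
      case False
      have "(1 / N) ^ Suc s \<le> 1" using N by (intro power_le_one) auto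
      then show ?thesis using False c0 by (simp add: survival_outside N_def[symmetric])
    next
      case True
      from Suc.prems obtain s' where s': "s' \<le> Suc s" "x + of_nat s' *s u \<notin> \<Gamma>" by auto
      with True obtain s'' where s'': "s' = Suc s''"
        by (cases s') (auto simp: vec_eq_iff)
      have "(x + u) + of_nat s'' *s u = x + of_nat s' *s u"
        by (simp add: s'' vec_eq_iff algebra_simps)
      then have first: "survival \<Gamma> (m + s) (x + u) \<le> c * (1 - (1 / N) ^ s)"
        using Suc.IH[of "x + u"] s' s'' unfolding N_def by (metis Suc_le_mono)
      have others: "survival \<Gamma> (m + s) y \<le> c" for y
        using survival_mono[of \<Gamma> m s y] c by (meson order_trans)
      have "(\<Sum>e\<in>unit_steps. survival \<Gamma> (m + s) (x + e)) =
          survival \<Gamma> (m + s) (x + u) + (\<Sum>e\<in>unit_steps - {u}. survival \<Gamma> (m + s) (x + e))"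
        using u by (simp add: sum.remove)
      also have "\<dots> \<le> c * (1 - (1 / N) ^ s) + (\<Sum>e\<in>unit_steps - {u}. c)"
        using first others by (intro add_mono sum_mono) auto
      also have "\<dots> = c * (1 - (1 / N) ^ s) + (N - 1) * c"
        using u N by (simp add: N_def card_unit_steps of_nat_diff)
      finally have "survival \<Gamma> (m + Suc s) x \<le> (c * (1 - (1 / N) ^ s) + (N - 1) * c) / N"
        using survival_Suc[OF True, of "m + s"] N by (simp add: N_def divide_right_mono)
      also have "\<dots> = c * (1 - (1 / N) ^ Suc s)"
        using N by (simp add: field_simps)
      finally show ?thesis unfolding N_def .
    qed
  }
qed

text \<open>The uniform escape probability from a finite set within card \<Gamma> + 1 steps.\<close>
definition escape_prob :: "(int^'d) set \<Rightarrow> real" where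
  "escape_prob \<Gamma> = (1 / (2 * real CARD('d))) ^ (card \<Gamma> + 1)"

lemma escape_prob_bounds: "0 < escape_prob (\<Gamma>::(int^'d) set)" "escape_prob \<Gamma> < 1"
proof -
  have N: "2 \<le> 2 * real CARD('d)" by (rule two_dim_ge_2)
  then show "0 < escape_prob \<Gamma>" by (simp add: escape_prob_def)
  have "1 < 2 * real CARD('d)" using N by linarith
  then have "0 < 1 / (2 * real CARD('d))" "1 / (2 * real CARD('d)) < 1" by auto
  then show "escape_prob \<Gamma> < 1"
    unfolding escape_prob_def Suc_eq_plus1[symmetric] by (rule power_Suc_less_one)
qed

lemma survival_blocks:
  fixes \<Gamma> :: "(int^'d) set"
  assumes fin: "finite \<Gamma>"
  shows "survival \<Gamma> (j * (card \<Gamma> + 1)) x \<le> (1 - escape_prob \<Gamma>) ^ j"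
proof (induction j arbitrary: x)
  case 0 then show ?case using survival_le_1 by simp
next
  case (Suc j)
  obtain i :: 'd where True by simp
  obtain s where "s \<le> card \<Gamma>" "x + of_nat s *s axis i 1 \<notin> \<Gamma>"
    using ray_leaves_finite_set[OF fin] by blast
  then have "\<exists>s'\<le>card \<Gamma> + 1. x + of_nat s' *s axis i 1 \<notin> \<Gamma>"
    by (intro exI[of _ s]) auto
  moreover have "\<forall>y. survival \<Gamma> (j * (card \<Gamma> + 1)) y \<le> (1 - escape_prob \<Gamma>) ^ j"
    using Suc.IH by blast
  ultimately have "survival \<Gamma> (j * (card \<Gamma> + 1) + (card \<Gamma> + 1)) x
      \<le> (1 - escape_prob \<Gamma>) ^ j * (1 - escape_prob \<Gamma>)"
    unfolding escape_prob_def by (intro survival_escape_along_ray[OF axis_in_unit_steps])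
  then show ?case by (simp add: algebra_simps)
qed

lemma survival_bound:
  fixes \<Gamma> :: "(int^'d) set"
  assumes fin: "finite \<Gamma>"
  shows "survival \<Gamma> m x \<le> (1 - escape_prob \<Gamma>) ^ (m div (card \<Gamma> + 1))"
proof -
  have "survival \<Gamma> m x \<le> survival \<Gamma> ((m div (card \<Gamma> + 1)) * (card \<Gamma> + 1)) x"
    by (metis div_mult_mod_eq survival_mono)
  also have "\<dots> \<le> (1 - escape_prob \<Gamma>) ^ (m div (card \<Gamma> + 1))"
    by (rule survival_blocks[OF fin])
  finally show ?thesis .
qed

lemma AE_leaves_finite_set:
  fixes \<Gamma> :: "(int^'d) set"
  assumes fin: "finite \<Gamma>"
  shows "AE X in srw. \<exists>k. walk y X k \<notin> \<Gamma>"
proof -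
  interpret S: prob_space "srw :: (int^'d) stream measure" by (rule prob_space_srw)
  define N where "N = {X::(int^'d) stream. \<forall>k. walk y X k \<in> \<Gamma>}"
  have N: "N \<in> sets srw"
  proof -
    have "(\<lambda>X. walk y X k) -` \<Gamma> \<in> sets srw" for k
      using measurable_sets[OF walk_measurable, of \<Gamma> y k] by simp
    moreover have "N = (\<Inter>k. (\<lambda>X. walk y X k) -` \<Gamma>)" by (auto simp: N_def)
    ultimately show ?thesis by (simp add: sets.countable_INT)
  qed
  have le: "measure srw N \<le> (1 - escape_prob \<Gamma>) ^ j" for j
  proof -
    have "measure srw N \<le> survival \<Gamma> (j * (card \<Gamma> + 1)) y"
      unfolding survival_def by (intro S.finite_measure_mono) (auto simp: N_def stays_in_def)
    also have "\<dots> \<le> (1 - escape_prob \<Gamma>) ^ j" by (rule survival_blocks[OF fin])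
    finally show ?thesis .
  qed
  have "measure srw N = 0"
  proof (rule ccontr)
    assume "measure srw N \<noteq> 0"
    hence "0 < measure srw N" by (simp add: zero_less_measure_iff)
    then obtain j where "(1 - escape_prob \<Gamma>) ^ j < measure srw N"
      using real_arch_pow_inv[of "measure srw N" "1 - escape_prob \<Gamma>"] escape_prob_bounds[of \<Gamma>]
      by auto
    with le[of j] show False by simp
  qed
  hence "emeasure srw N = 0" by (simp add: S.emeasure_eq_measure)
  thus ?thesis by (intro AE_I[OF _ _ N]) (auto simp: N_def)
qed

section \<open>Moments of the exit time and integrability of the signature\<close>

text \<open>A decay rate r per block of L steps is a decay rate r^(1/L) per step.\<close>
lemma power_div_le_powr:
  fixes r :: real
  assumes r: "0 < r" "r < 1" and L: "0 < L"
  shows "r ^ (m div L) \<le> (r powr (1 / real L)) ^ m / r"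
proof -
  have "m div L * L + m mod L = m" by (rule div_mult_mod_eq)
  moreover have "m mod L < L" using L by simp
  ultimately have "m < m div L * L + L" by linarith
  hence "m < (m div L + 1) * L" by simp
  hence "real m < (real (m div L) + 1) * real L" by (metis of_nat_1 of_nat_add of_nat_less_iff of_nat_mult)
  hence "real m / real L \<le> real (m div L) + 1" using L by (simp add: divide_simps)
  hence "r powr (real (m div L) + 1) \<le> r powr (real m / real L)"
    using r by (intro powr_mono') auto
  moreover have "r powr (real (m div L) + 1) = r ^ (m div L) * r"
    using r by (simp add: powr_add powr_realpow)
  moreover have "r powr (real m / real L) = (r powr (1 / real L)) ^ m"
    using r by (simp add: powr_powr powr_realpow[symmetric] mult.commute)
  ultimately show ?thesis using r by (simp add: field_simps)
qed

lemma exit_time_geometric_tail: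
  fixes \<Gamma> :: "(int^'d) set"
  assumes fin: "finite \<Gamma>"
  obtains C \<theta> where "0 \<le> \<theta>" "\<theta> < 1" "0 \<le> C"
    "\<And>m x. measure srw {\<omega>. m \<le> exit_time \<Gamma> x \<omega>} \<le> C * \<theta> ^ m"
proof -
  interpret S: prob_space "srw :: (int^'d) stream measure" by (rule prob_space_srw)
  define L where "L = card \<Gamma> + 1"
  define r where "r = 1 - escape_prob \<Gamma>"
  have r: "0 < r" "r < 1" using escape_prob_bounds[of \<Gamma>] by (auto simp: r_def)
  define \<theta> where "\<theta> = r powr (1 / real L)"
  have th: "0 < \<theta>" "\<theta> < 1"
    using r powr_less_mono2[of "1 / real L" r 1] unfolding \<theta>_def L_def by auto
  define C where "C = 1 / (\<theta> * r)"
  have "1 \<le> C" using th r by (simp add: C_def mult_le_one)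
  have "measure srw {\<omega>. m \<le> exit_time \<Gamma> x \<omega>} \<le> C * \<theta> ^ m" for m x
  proof (cases m)
    case 0
    then show ?thesis using \<open>1 \<le> C\<close> by (simp add: order_trans[OF S.prob_le_1])
  next
    case (Suc m')
    have "measure srw {\<omega>. m \<le> exit_time \<Gamma> x \<omega>} \<le> survival \<Gamma> m' x"
      unfolding survival_def Suc
      by (intro S.finite_measure_mono) (auto simp: Suc_le_eq exit_time_gt_imp_stays_in)
    also have "\<dots> \<le> r ^ (m' div L)" using survival_bound[OF fin] by (simp add: r_def L_def)
    also have "\<dots> \<le> \<theta> ^ m' / r" unfolding \<theta>_def using r by (intro power_div_le_powr) (auto simp: L_def)
    also have "\<dots> = C * \<theta> ^ m" using th r by (simp add: C_def Suc)
    finally show ?thesis .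
  qed
  with th \<open>1 \<le> C\<close> show ?thesis by (intro that[of \<theta> C]) auto
qed

lemma summable_poly_times_geometric:
  fixes \<theta> :: real
  assumes th: "0 \<le> \<theta>" "\<theta> < 1"
  shows "summable (\<lambda>n. (real n + 1) ^ K * \<theta> ^ n)"
proof -
  define c where "c = (1 + \<theta>) / 2"
  have c: "\<theta> < c" "c < 1" using th by (auto simp: c_def)
  define g where "g n = ((real n + 2) / (real n + 1)) ^ K" for n
  have "(\<lambda>n. 1 + inverse (real (Suc n))) \<longlonglongrightarrow> 1"
    using LIMSEQ_inverse_real_of_nat_add[of 1] .
  moreover have "1 + inverse (real (Suc n)) = (real n + 2) / (real n + 1)" for n
    by (simp add: field_simps)
  ultimately have "(\<lambda>n. (real n + 2) / (real n + 1)) \<longlonglongrightarrow> 1" by simp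
  hence "(\<lambda>n. g n * \<theta>) \<longlonglongrightarrow> 1 ^ K * \<theta>" unfolding g_def by (intro tendsto_intros)
  hence "eventually (\<lambda>n. g n * \<theta> < c) sequentially" using c by (intro order_tendstoD(2)) auto
  then obtain N where N: "\<And>n. n \<ge> N \<Longrightarrow> g n * \<theta> < c" by (auto simp: eventually_sequentially)
  show ?thesis
  proof (rule summable_ratio_test[OF c(2)])
    fix n assume "n \<ge> N"
    hence gn: "g n * \<theta> \<le> c" using N by force
    have "norm ((real (Suc n) + 1) ^ K * \<theta> ^ Suc n) = (g n * \<theta>) * ((real n + 1) ^ K * \<theta> ^ n)"
      using th by (simp add: g_def power_divide field_simps add_ac)
    also have "\<dots> \<le> c * norm ((real n + 1) ^ K * \<theta> ^ n)"
      using gn th by (simp add: mult_right_mono)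
    finally show "norm ((real (Suc n) + 1) ^ K * \<theta> ^ Suc n) \<le> c * norm ((real n + 1) ^ K * \<theta> ^ n)" .
  qed
qed

lemma exit_time_moment_finite:
  fixes \<Gamma> :: "(int^'d) set"
  assumes fin: "finite \<Gamma>"
  shows "(\<integral>\<^sup>+\<omega>. ennreal ((real (exit_time \<Gamma> x \<omega>) + 1) ^ K) \<partial>srw) < \<infinity>"
proof -
  interpret S: prob_space "srw :: (int^'d) stream measure" by (rule prob_space_srw)
  obtain C \<theta> where th: "0 \<le> \<theta>" "\<theta> < 1" and C: "0 \<le> C"
    and tail: "\<And>m. measure srw {\<omega>. m \<le> exit_time \<Gamma> x \<omega>} \<le> C * \<theta> ^ m"
    using exit_time_geometric_tail[OF fin] by metis
  define A where "A m = {\<omega>. m \<le> exit_time \<Gamma> x \<omega>}" for m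
  have A[measurable]: "A m \<in> sets srw" for m
    unfolding A_def using measurable_sets[OF exit_time_measurable, of "{m..}" \<Gamma> x] by (simp add: vimage_def)
  have "(\<integral>\<^sup>+\<omega>. ennreal ((real (exit_time \<Gamma> x \<omega>) + 1) ^ K) \<partial>srw)
      \<le> (\<integral>\<^sup>+\<omega>. (\<Sum>m. ennreal ((real m + 1) ^ K) * indicator (A m) \<omega>) \<partial>srw)"
  proof (rule nn_integral_mono)
    fix \<omega>
    have "(\<Sum>m\<in>{exit_time \<Gamma> x \<omega>}. ennreal ((real m + 1) ^ K) * indicator (A m) \<omega>)
        \<le> (\<Sum>m. ennreal ((real m + 1) ^ K) * indicator (A m) \<omega>)"
      by (rule sum_le_suminf) auto
    thus "ennreal ((real (exit_time \<Gamma> x \<omega>) + 1) ^ K) \<le> (\<Sum>m. ennreal ((real m + 1) ^ K) * indicator (A m) \<omega>)"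
      by (simp add: A_def)
  qed
  also have "\<dots> = (\<Sum>m. ennreal ((real m + 1) ^ K) * emeasure srw (A m))"
    by (simp add: nn_integral_suminf nn_integral_cmult_indicator)
  also have "\<dots> \<le> (\<Sum>m. ennreal (C * ((real m + 1) ^ K * \<theta> ^ m)))"
  proof (intro suminf_le summableI)
    fix m
    have "emeasure srw (A m) \<le> ennreal (C * \<theta> ^ m)"
      using tail[of m] by (simp add: S.emeasure_eq_measure A_def ennreal_leI)
    hence "ennreal ((real m + 1) ^ K) * emeasure srw (A m) \<le> ennreal ((real m + 1) ^ K) * ennreal (C * \<theta> ^ m)"
      by (rule mult_left_mono) simp
    also have "\<dots> = ennreal (C * ((real m + 1) ^ K * \<theta> ^ m))"
      using C th by (simp add: ennreal_mult'[symmetric] mult_ac)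
    finally show "ennreal ((real m + 1) ^ K) * emeasure srw (A m) \<le> ennreal (C * ((real m + 1) ^ K * \<theta> ^ m))" .
  qed
  also have "\<dots> < \<infinity>"
    using ennreal_suminf_neq_top[OF summable_mult[OF summable_poly_times_geometric[OF th, of K]]] C th
    by (simp add: less_top)
  finally show ?thesis .
qed

lemma path_sig_exit_integrable:
  fixes \<Gamma> :: "(int^'d) set"
  assumes fin: "finite \<Gamma>"
  shows "integrable srw (\<lambda>\<omega>. path_sig (stake (exit_time \<Gamma> x \<omega>) \<omega>) w)"
proof (rule Bochner_Integration.integrable_bound)
  show "integrable srw (\<lambda>\<omega>. (real (exit_time \<Gamma> x \<omega>) + 1) ^ length w)"
    unfolding integrable_iff_bounded using exit_time_moment_finite[OF fin, of x "length w"]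
    by (simp add: measurable_compose[OF exit_time_measurable])
  show "AE \<omega> in srw. norm (path_sig (stake (exit_time \<Gamma> x \<omega>) \<omega>) w)
      \<le> norm ((real (exit_time \<Gamma> x \<omega>) + 1) ^ length w)"
    using AE_srw_unit_steps
  proof eventually_elim
    case (elim \<omega>)
    then have "set (stake (exit_time \<Gamma> x \<omega>) \<omega>) \<subseteq> unit_steps"
      by (auto simp: in_set_conv_nth)
    from path_sig_bound[OF this, of w] show ?case by simp
  qed
qed simp

section \<open>The first-step recursion for the expected signature\<close>

text \<open>Almost surely the walk from x + e
  leaves \<Gamma>, so the stopped path from x is the step e followed by the stopped path from
  x + e, whose signature is exp(e) \<otimes> (signature of the rest).\<close>
lemma Phi_first_step:
  fixes \<Gamma> :: "(int^'d) set"
  assumes fin: "finite \<Gamma>" and x: "x \<in> \<Gamma>"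
  shows "Phi \<Gamma> x w = (\<Sum>e\<in>unit_steps. tmul (texp (rvec e)) (Phi \<Gamma> (x + e)) w) / (2 * real CARD('d))"
proof -
  define F where "F = (\<lambda>y v X. path_sig (stake (exit_time \<Gamma> y X) X) v)"
  have F_int: "integrable srw (F y v)" for y v
    unfolding F_def by (rule path_sig_exit_integrable[OF fin])
  have [measurable]: "F y v \<in> borel_measurable srw" for y v
    unfolding F_def by (rule path_sig_exit_measurable)
  have step: "integral\<^sup>L srw (\<lambda>X. F x w (e ## X)) = tmul (texp (rvec e)) (Phi \<Gamma> (x + e)) w" for e
  proof -
    have "AE X in srw. F x w (e ## X) = (\<Sum>k\<le>length w. texp (rvec e) (take k w) * F (x + e) (drop k w) X)"
      using AE_leaves_finite_set[OF fin, of "x + e"]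
    proof eventually_elim
      case (elim X)
      then obtain k where "walk (x + e) X k \<notin> \<Gamma>" by auto
      from exit_time_Stream[OF x this] show ?case by (simp add: F_def path_sig_Cons tmul_def)
    qed
    then have "integral\<^sup>L srw (\<lambda>X. F x w (e ## X)) =
        integral\<^sup>L srw (\<lambda>X. \<Sum>k\<le>length w. texp (rvec e) (take k w) * F (x + e) (drop k w) X)"
      by (intro integral_cong_AE) measurable
    also have "\<dots> = (\<Sum>k\<le>length w. texp (rvec e) (take k w) * integral\<^sup>L srw (F (x + e) (drop k w)))"
      using F_int by simp
    also have "\<dots> = tmul (texp (rvec e)) (Phi \<Gamma> (x + e)) w"
      by (simp add: tmul_def Phi_def F_def)
    finally show ?thesis .
  qed
  have "Phi \<Gamma> x w = integral\<^sup>L srw (F x w)" by (simp add: Phi_def F_def)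
  also have "\<dots> = (\<Sum>e\<in>unit_steps. integral\<^sup>L srw (\<lambda>X. F x w (e ## X))) / (2 * real CARD('d))"
    by (rule srw_integral_first_step[OF F_int])
  finally show ?thesis by (simp add: step)
qed

lemma Phi_at_Nil: "Phi \<Gamma> (x::int^'d) [] = 1"
proof -
  interpret S: prob_space "srw :: (int^'d) stream measure" by (rule prob_space_srw)
  show ?thesis using S.prob_space by (simp add: Phi_def path_sig_at_Nil)
qed

lemma Phi_outside:
  assumes "(x::int^'d) \<notin> \<Gamma>"
  shows "Phi \<Gamma> x = tone"
proof -
  interpret S: prob_space "srw :: (int^'d) stream measure" by (rule prob_space_srw)
  show ?thesis using S.prob_space assms by (simp add: Phi_def exit_time_outside path_sig_Nil)
qed

text \<open>A positive maximum would propagate along a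
  coordinate ray, which must leave the set.\<close>
lemma mean_value_nonpos:
  fixes f :: "int^'d \<Rightarrow> real" and \<Gamma> :: "(int^'d) set"
  assumes fin: "finite \<Gamma>" and out: "\<And>y. y \<notin> \<Gamma> \<Longrightarrow> f y = 0"
    and mean: "\<And>y. y \<in> \<Gamma> \<Longrightarrow> f y = (\<Sum>e\<in>unit_steps. f (y + e)) / (2 * real CARD('d))"
  shows "f y \<le> 0"
proof (rule ccontr)
  assume "\<not> f y \<le> 0"
  hence fy: "f y > 0" by simp
  hence yG: "y \<in> \<Gamma>" using out by force
  define M where "M = Max (f ` \<Gamma>)"
  have "f y \<le> M" unfolding M_def using fin yG by simp
  then have fM: "f z \<le> M" for z
    using fin out fy by (cases "z \<in> \<Gamma>") (auto simp: M_def)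
  have "M \<in> f ` \<Gamma>" unfolding M_def using fin yG by (intro Max_in) auto
  then obtain y0 where y0: "y0 \<in> \<Gamma>" "f y0 = M" by auto
  have Mpos: "M > 0" using fM[of y] fy by simp
  have propagate: "f (z + e) = M" if z: "z \<in> \<Gamma>" "f z = M" and e: "e \<in> unit_steps" for z e
  proof -
    have "(\<Sum>e\<in>unit_steps. f (z + e)) = 2 * real CARD('d) * M"
      using mean[OF z(1)] z(2) by (simp add: field_simps)
    hence "(\<Sum>e\<in>unit_steps. M - f (z + e)) = 0" by (simp add: sum_subtractf card_unit_steps)
    hence "\<forall>e\<in>unit_steps. M - f (z + e) = 0"
      by (subst (asm) sum_nonneg_eq_0_iff) (auto simp: fM)
    thus ?thesis using e by simp
  qed
  obtain i :: 'd where True by simp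
  have ray: "y0 + of_nat s *s axis i 1 \<in> \<Gamma> \<and> f (y0 + of_nat s *s axis i 1) = M" for s
  proof (induction s)
    case 0 thus ?case using y0 by (simp add: vec_eq_iff)
  next
    case (Suc s)
    have "y0 + of_nat (Suc s) *s axis i 1 = (y0 + of_nat s *s axis i 1) + axis i 1"
      by (simp add: vec_eq_iff algebra_simps)
    then have "f (y0 + of_nat (Suc s) *s axis i 1) = M"
      using Suc propagate axis_in_unit_steps by metis
    with Mpos out show ?case by force
  qed
  from ray_leaves_finite_set[OF fin, of y0 i] ray show False by auto
qed

text \<open>The degree-one part of Phi vanishes: it is harmonic in \<Gamma> (the steps are
  centred), zero off \<Gamma>, hence zero by the maximum principle applied to \<plusminus>.\<close>
lemma Phi_degree_one:
  fixes \<Gamma> :: "(int^'d) set"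
  assumes fin: "finite \<Gamma>"
  shows "Phi \<Gamma> x [i] = 0"
proof -
  define f where "f y = Phi \<Gamma> y [i]" for y
  have out: "f y = 0" if "y \<notin> \<Gamma>" for y
    using Phi_outside[OF that] by (simp add: f_def tone_def)
  have mean: "f y = (\<Sum>e\<in>unit_steps. f (y + e)) / (2 * real CARD('d))" if y: "y \<in> \<Gamma>" for y
  proof -
    have "f y = (\<Sum>e\<in>unit_steps. f (y + e) + rvec e $ i) / (2 * real CARD('d))"
      unfolding f_def Phi_first_step[OF fin y]
      by (simp add: tmul_def texp_def tpow_def Phi_at_Nil)
    then show ?thesis by (simp add: sum.distrib sum_unit_steps_coord)
  qed
  have "f x \<le> 0" by (rule mean_value_nonpos[OF fin out mean])
  moreover have "- f x \<le> 0"
    by (rule mean_value_nonpos[OF fin, where f="\<lambda>y. - f y"]) (auto simp: out mean sum_negf)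
  ultimately show ?thesis by (simp add: f_def)
qed

section \<open>The Laplacian of the homogeneous components\<close>

text \<open>Taking the degree-n part of the first-step recursion: the i = 0 term of
  exp(e) \<otimes> Phi(x + e) is Phi(x + e) itself, which produces the Laplacian.\<close>
lemma dlap_Phi_component:
  fixes \<Gamma> :: "(int^'d) set"
  assumes fin: "finite \<Gamma>" and x: "x \<in> \<Gamma>"
  shows "dlap (\<lambda>y. rho n (Phi \<Gamma> y) w) x =
            - (\<Sum>e\<in>unit_steps. (1 / (2 * real CARD('d))) *
                 (\<Sum>i=1..n. tmul (tscale (1 / fact i) (tpow (rvec e) i))
                                  (rho (n - i) (Phi \<Gamma> (x + e))) w))"
proof (cases "length w = n")
  case False
  then have "tmul (tscale (1 / fact i) (tpow (rvec e) i)) (rho (n - i) (Phi \<Gamma> (x + e))) w = 0"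
    if "i \<in> {1..n}" for i e
    using that by (simp add: tmul_tpow_rho)
  with False show ?thesis by (simp add: dlap_def rho_def)
next
  case True
  define c where "c = 1 / (2 * real CARD('d))"
  have rec: "Phi \<Gamma> x w = c * (\<Sum>e\<in>unit_steps. tmul (texp (rvec e)) (Phi \<Gamma> (x + e)) w)"
    using Phi_first_step[OF fin x] by (simp add: c_def)
  have "dlap (\<lambda>y. rho n (Phi \<Gamma> y) w) x = c * (\<Sum>e\<in>unit_steps. Phi \<Gamma> (x + e) w) - Phi \<Gamma> x w"
    using True by (simp add: dlap_def rho_def c_def)
  also have "\<dots> = - (\<Sum>e\<in>unit_steps. c * (tmul (texp (rvec e)) (Phi \<Gamma> (x + e)) w - Phi \<Gamma> (x + e) w))"
    unfolding rec by (simp add: sum_subtractf sum_distrib_left[symmetric] algebra_simps)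
  finally show ?thesis unfolding tmul_texp_minus[OF True] by (simp add: c_def)
qed

theorem mainTheorem17:
  fixes \<Gamma> :: "(int^'d) set"
  assumes "finite \<Gamma>"
  shows "(\<forall>x\<in>\<Gamma>. Phi \<Gamma> x =
            (\<lambda>w. \<Sum>e\<in>unit_steps. (1 / (2 * real CARD('d))) *
                    tmul (texp (rvec e)) (Phi \<Gamma> (x + e)) w))
       \<and> (\<forall>n\<ge>2. \<forall>x\<in>\<Gamma>. \<forall>w.
            dlap (\<lambda>y. rho n (Phi \<Gamma> y) w) x =
            - (\<Sum>e\<in>unit_steps. (1 / (2 * real CARD('d))) *
                 (\<Sum>i=1..n. tmul (tscale (1 / fact i) (tpow (rvec e) i))
                                  (rho (n - i) (Phi \<Gamma> (x + e))) w)))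
       \<and> (\<forall>n\<ge>2. \<forall>x\<in>lattice_boundary \<Gamma>. rho n (Phi \<Gamma> x) = tzero)
       \<and> (\<forall>x\<in>lattice_closure \<Gamma>. rho 0 (Phi \<Gamma> x) = tone \<and> rho 1 (Phi \<Gamma> x) = tzero)"
proof (intro conjI ballI allI impI)
  fix x assume "x \<in> \<Gamma>"
  then show "Phi \<Gamma> x = (\<lambda>w. \<Sum>e\<in>unit_steps. (1 / (2 * real CARD('d))) *
                              tmul (texp (rvec e)) (Phi \<Gamma> (x + e)) w)"
    by (simp add: fun_eq_iff Phi_first_step[OF assms] sum_divide_distrib)
next
  fix n :: nat and x w assume "x \<in> \<Gamma>"
  then show "dlap (\<lambda>y. rho n (Phi \<Gamma> y) w) x =
            - (\<Sum>e\<in>unit_steps. (1 / (2 * real CARD('d))) *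
                 (\<Sum>i=1..n. tmul (tscale (1 / fact i) (tpow (rvec e) i))
                                  (rho (n - i) (Phi \<Gamma> (x + e))) w))"
    by (rule dlap_Phi_component[OF assms])
next
  fix n :: nat and x assume "n \<ge> 2" "x \<in> lattice_boundary \<Gamma>"
  then show "rho n (Phi \<Gamma> x) = tzero"
    by (auto simp: lattice_boundary_def Phi_outside rho_def tone_def tzero_def)
next
  fix x
  show "rho 0 (Phi \<Gamma> x) = tone"
    by (auto simp: rho_def tone_def Phi_at_Nil)
  show "rho 1 (Phi \<Gamma> x) = tzero"
    by (auto simp: fun_eq_iff rho_def tzero_def length_Suc_conv Phi_degree_one[OF assms])
qed

end
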